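(* Let $l,n$ be positive integers, $\mathbf{x}_1,\dots,\mathbf{x}_l\in\mathbb{R}^n$, $y_1,\dots,y_l\in\mathbb{R}$, $a_1,\dots,a_l,b_1,\dots,b_l\in\mathbb{R}$. Let $\varphi:\mathbb{R}\to[0,\infty)$ be nonconstant, continuous and sublinear, with $\varphi^*=\iota_{[\alpha,\beta]}$, $\alpha<\beta$. Let $\mathbf Z\in\mathbb{R}^{l\times n}$ have $i$-th row $a_i\mathbf x_i^T$, $\bar{\mathbf y}=(b_1y_1,\dots,b_ly_l)^T$, and for $C>0$ let $\theta^*(C)$ denote an optimal solution of $$\min_{\theta\in[\alpha,\beta]^l}\ \tfrac{C}{2}\|\mathbf Z^T\theta\|^2-\langle\bar{\mathbf y},\theta\rangle.$$ Let $0<C_1<C_2<\dots<C_{\mathcal K}$ and suppose $\theta^*(C_k)$ is known for some integer $1\le k<\mathcal K$. If $$\tfrac{C_{k+1}+C_k}{2}\langle\mathbf Z^T\theta^*(C_k),a_i\mathbf x_i\rangle-\tfrac{C_{k+1}-C_k}{2}\|\mathbf Z^T\theta^*(C_k)\|\,\|a_i\mathbf x_i\|>b_iy_i,$$ then $[\theta^*(C_{k+1})]_i=\alpha$, i.e., $i\in\mathcal R$ (at $C=C_{k+1}$). Similarly, if $$\tfrac{C_{k+1}+C_k}{2}\langle\mathbf Z^T\theta^*(C_k),a_i\mathbf x_i\rangle+\tfrac{C_{k+1}-C_k}{2}\|\mathbf Z^T\theta^*(C_k)\|\,\|a_i\mathbf x_i\|<b_iy_i,$$ then $[\theta^*(C_{k+1})]_i=\beta$,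 i.e., $i\in\mathcal L$.
   Context: This dual corresponds to the primal problem $\min_{\mathbf w\in\mathbb{R}^n}\frac12\|\mathbf w\|^2+C\sum_{i=1}^l\varphi(\mathbf w^T(a_i\mathbf x_i)+b_iy_i)$ with unique solution $\mathbf w^*(C)=-C\mathbf Z^T\theta^*(C)$. Sublinear means convex and positively homogeneous; $\varphi^*(s)=\sup_t(st-\varphi(t))$; $\iota_{[\alpha,\beta]}$ is $0$ on $[\alpha,\beta]$, $+\infty$ elsewhere. At parameter $C$: $\mathcal R=\{i:-\langle\mathbf w^*(C),a_i\mathbf x_i\rangle>b_iy_i\}$, $\mathcal L=\{i:-\langle\mathbf w^*(C),a_i\mathbf x_i\rangle<b_iy_i\}$. *)

theory Defs
  imports "HOL-Analysis.Analysis"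
begin

definition sublinear :: "(real \<Rightarrow> real) \<Rightarrow> bool" where
  "sublinear f \<longleftrightarrow> convex_on UNIV f \<and> (\<forall>c t. c > 0 \<longrightarrow> f (c * t) = c * f t)"

definition fconj :: "(real \<Rightarrow> real) \<Rightarrow> real \<Rightarrow> ereal" where
  "fconj f s = (SUP t. ereal (s * t - f t))"

definition iota_interval :: "real \<Rightarrow> real \<Rightarrow> real \<Rightarrow> ereal" where
  "iota_interval a b s = (if a \<le> s \<and> s \<le> b then 0 else \<infinity>)"

definition Zmat :: "('l \<Rightarrow> real) \<Rightarrow> ('l \<Rightarrow> real^'n) \<Rightarrow> real^'n^'l" where
  "Zmat a x = (\<chi> i. a i *\<^sub>R x i)"

definition ybar :: "('l \<Rightarrow> real) \<Rightarrow> ('l \<Rightarrow> real) \<Rightarrow> real^'l" where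
  "ybar b y = (\<chi> i. b i * y i)"

definition dual_obj :: "real^'n^'l \<Rightarrow> real^'l \<Rightarrow> real \<Rightarrow> real^'l \<Rightarrow> real" where
  "dual_obj Z yb C \<theta> = C / 2 * (norm (transpose Z *v \<theta>))\<^sup>2 - inner yb \<theta>"

definition box :: "real \<Rightarrow> real \<Rightarrow> (real^'l) set" where
  "box_def": "box \<alpha> \<beta> = {\<theta>. \<forall>i. \<alpha> \<le> \<theta> $ i \<and> \<theta> $ i \<le> \<beta>}"

definition dual_opt :: "real^'n^'l \<Rightarrow> real^'l \<Rightarrow> real \<Rightarrow> real \<Rightarrow> real \<Rightarrow> real^'l \<Rightarrow> bool" where
  "dual_opt Z yb \<alpha> \<beta> C \<theta> \<longleftrightarrow> \<theta> \<in> box \<alpha> \<beta> \<and> (\<forall>\<theta>'\<in>box \<alpha> \<beta>. dual_obj Z yb C \<theta> \<le> dual_obj Z yb C \<theta>')"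

text \<open>Primal solution w*(C) = - C Z^T theta*(C).\<close>
definition wstar :: "real^'n^'l \<Rightarrow> real \<Rightarrow> real^'l \<Rightarrow> real^'n" where
  "wstar Z C \<theta> = - (C *\<^sub>R (transpose Z *v \<theta>))"

definition Rset :: "('l \<Rightarrow> real) \<Rightarrow> ('l \<Rightarrow> real^'n) \<Rightarrow> ('l \<Rightarrow> real) \<Rightarrow> ('l \<Rightarrow> real) \<Rightarrow> real^'n \<Rightarrow> 'l set" where
  "Rset a x b y w = {i. - inner w (a i *\<^sub>R x i) > b i * y i}"

definition Lset :: "('l \<Rightarrow> real) \<Rightarrow> ('l \<Rightarrow> real^'n) \<Rightarrow> ('l \<Rightarrow> real) \<Rightarrow> ('l \<Rightarrow> real) \<Rightarrow> real^'n \<Rightarrow> 'l set" where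
  "Lset a x b y w = {i. - inner w (a i *\<^sub>R x i) < b i * y i}"

end

theory Submission
  imports Defs
begin

text \<open>
The dual is a convex quadratic program over a box, so an optimum \<open>\<theta>\<close> for the parameter \<open>C\<close> satisfies
the variational inequality \<open>\<langle>C Z\<^sup>T\<theta>, Z\<^sup>T(\<theta>' - \<theta>)\<rangle> \<ge> \<langle>y\<^sub>b, \<theta>' - \<theta>\<rangle>\<close> on the box. Adding the two
inequalities for \<open>C\<^sub>k\<close> and \<open>C\<^sub>k\<^sub>+\<^sub>1\<close> (with the optima swapped) shows that \<open>C\<^sub>k\<^sub>+\<^sub>1 Z\<^sup>T\<theta>*(C\<^sub>k\<^sub>+\<^sub>1)\<close> lies
in the ball with centre \<open>(C\<^sub>k\<^sub>+\<^sub>1 + C\<^sub>k)/2 \<cdot> Z\<^sup>T\<theta>*(C\<^sub>k)\<close> and radius \<open>(C\<^sub>k\<^sub>+\<^sub>1 - C\<^sub>k)/2 \<cdot> \<parallel>Z\<^sup>T\<theta>*(C\<^sub>k)\<parallel>\<close>.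
By Cauchy-Schwarz the hypotheses then fix the sign of the \<open>i\<close>-th partial derivative of the dual
objective at \<open>\<theta>*(C\<^sub>k\<^sub>+\<^sub>1)\<close>, and the variational inequality along the \<open>i\<close>-th coordinate forces
\<open>[\<theta>*(C\<^sub>k\<^sub>+\<^sub>1)]\<^sub>i\<close> to the corresponding end of \<open>[\<alpha>, \<beta>]\<close>.
\<close>

lemma nonneg_if_nonneg_add_small_multiples:
  fixes L Q :: real
  assumes "\<And>t. 0 < t \<Longrightarrow> t \<le> 1 \<Longrightarrow> 0 \<le> L + t * Q"
  shows "0 \<le> L"
proof (rule tendsto_lowerbound)
  show "((\<lambda>t. L + t * Q) \<longlongrightarrow> L) (at_right 0)"
    by (auto intro!: tendsto_eq_intros)
  show "\<forall>\<^sub>F t in at_right 0. 0 \<le> L + t * Q"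
    using eventually_at_right_real[of 0 1] by (rule eventually_mono) (auto intro: assms)
qed simp

lemma quadratic_min_variational_ineq:
  fixes A :: "'a::real_inner \<Rightarrow> 'b::real_inner"
  assumes "linear A" "convex S" "\<theta> \<in> S" "\<theta>' \<in> S"
    and min: "\<And>\<eta>. \<eta> \<in> S \<Longrightarrow>
      C / 2 * (norm (A \<theta>))\<^sup>2 - inner c \<theta> \<le> C / 2 * (norm (A \<eta>))\<^sup>2 - inner c \<eta>"
  shows "0 \<le> C * inner (A \<theta>) (A (\<theta>' - \<theta>)) - inner c (\<theta>' - \<theta>)"
proof (rule nonneg_if_nonneg_add_small_multiples)
  fix t :: real
  assume t: "0 < t" "t \<le> 1"
  define d where "d = \<theta>' - \<theta>"
  have "\<theta> + t *\<^sub>R d = (1 - t) *\<^sub>R \<theta> + t *\<^sub>R \<theta>'"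
    by (simp add: d_def algebra_simps)
  also have "\<dots> \<in> S"
    using assms(2-4) t by (intro convexD) auto
  finally have "C / 2 * (norm (A \<theta>))\<^sup>2 - inner c \<theta>
      \<le> C / 2 * (norm (A \<theta> + t *\<^sub>R A d))\<^sup>2 - inner c (\<theta> + t *\<^sub>R d)"
    using min linear_add[OF \<open>linear A\<close>] linear_scale[OF \<open>linear A\<close>] by metis
  moreover have "(norm (A \<theta> + t *\<^sub>R A d))\<^sup>2
      = (norm (A \<theta>))\<^sup>2 + 2 * t * inner (A \<theta>) (A d) + t\<^sup>2 * (norm (A d))\<^sup>2"
    using dot_norm[of "A \<theta>" "t *\<^sub>R A d"] by (simp add: power_mult_distrib)
  ultimately have "0 \<le> t * (C * inner (A \<theta>) (A d) - inner c d + t * (C / 2 * (norm (A d))\<^sup>2))"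
    by (simp add: inner_add_right algebra_simps power2_eq_square)
  with t show "0 \<le> C * inner (A \<theta>) (A (\<theta>' - \<theta>)) - inner c (\<theta>' - \<theta>)
      + t * (C / 2 * (norm (A (\<theta>' - \<theta>)))\<^sup>2)"
    by (simp add: d_def zero_le_mult_iff)
qed

lemma convex_dual_box: "convex (box \<alpha> \<beta> :: (real^'l) set)"
proof (rule convexI)
  fix \<theta> \<theta>' :: "real^'l" and u v :: real
  assume box: "\<theta> \<in> box \<alpha> \<beta>" "\<theta>' \<in> box \<alpha> \<beta>" and uv: "0 \<le> u" "0 \<le> v" "u + v = 1"
  have "\<alpha> \<le> u * \<theta> $ j + v * \<theta>' $ j \<and> u * \<theta> $ j + v * \<theta>' $ j \<le> \<beta>" for j
  proof -
    have "\<alpha> \<le> \<theta> $ j" "\<theta> $ j \<le> \<beta>" "\<alpha> \<le> \<theta>' $ j" "\<theta>' $ j \<le> \<beta>"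
      using box by (auto simp: box_def)
    then have "u * \<alpha> + v * \<alpha> \<le> u * \<theta> $ j + v * \<theta>' $ j"
        "u * \<theta> $ j + v * \<theta>' $ j \<le> u * \<beta> + v * \<beta>"
      using uv by (intro add_mono mult_left_mono; simp)+
    then show ?thesis
      using uv by (simp add: distrib_right[symmetric])
  qed
  then show "u *\<^sub>R \<theta> + v *\<^sub>R \<theta>' \<in> box \<alpha> \<beta>"
    by (simp add: box_def)
qed

lemma dual_opt_variational_ineq:
  fixes Z :: "real^'n^'l::finite"
  assumes "dual_opt Z yb \<alpha> \<beta> C \<theta>" "\<theta>' \<in> box \<alpha> \<beta>"
  shows "0 \<le> C * inner (transpose Z *v \<theta>) (transpose Z *v (\<theta>' - \<theta>)) - inner yb (\<theta>' - \<theta>)"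
  using assms convex_dual_box
  by (intro quadratic_min_variational_ineq[where A = "(*v) (transpose Z)" and S = "box \<alpha> \<beta>"])
     (auto simp: dual_opt_def dual_obj_def)

lemma dual_opt_monotone:
  fixes Z :: "real^'n^'l::finite"
  assumes opt: "dual_opt Z yb \<alpha> \<beta> c \<theta>" and opt': "dual_opt Z yb \<alpha> \<beta> c' \<theta>'"
  defines "u \<equiv> transpose Z *v \<theta>" and "u' \<equiv> transpose Z *v \<theta>'"
  shows "0 \<le> c * inner u (u' - u) + c' * inner u' (u - u')"
proof -
  have "\<theta> \<in> box \<alpha> \<beta>" "\<theta>' \<in> box \<alpha> \<beta>"
    using opt opt' by (simp_all add: dual_opt_def)
  then show ?thesis
    using dual_opt_variational_ineq[OF opt] dual_opt_variational_ineq[OF opt']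
    by (fastforce simp: u_def u'_def matrix_vector_mult_diff_distrib inner_diff_right)
qed

lemma dual_opt_coordinate_at_bounds:
  fixes Z :: "real^'n^'l::finite"
  assumes opt: "dual_opt Z yb \<alpha> \<beta> C \<theta>"
  shows "yb $ i < C * inner (transpose Z *v \<theta>) (Z $ i) \<Longrightarrow> \<theta> $ i = \<alpha>"
    and "C * inner (transpose Z *v \<theta>) (Z $ i) < yb $ i \<Longrightarrow> \<theta> $ i = \<beta>"
proof -
  define g where "g = C * inner (transpose Z *v \<theta>) (Z $ i) - yb $ i"
  have \<theta>_box: "\<alpha> \<le> \<theta> $ i" "\<theta> $ i \<le> \<beta>"
    using opt by (auto simp: dual_opt_def box_def)
  have along_axis: "0 \<le> (t - \<theta> $ i) * g" if "\<alpha> \<le> t" "t \<le> \<beta>" for t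
  proof -
    let ?\<theta>' = "\<theta> + (t - \<theta> $ i) *\<^sub>R axis i 1"
    have "?\<theta>' \<in> box \<alpha> \<beta>"
      using opt that by (auto simp: dual_opt_def box_def axis_def)
    from dual_opt_variational_ineq[OF opt this]
    show ?thesis
      by (simp add: matrix_vector_mult_scaleR matrix_vector_mult_basis row_def inner_axis g_def
          algebra_simps)
  qed
  show "\<theta> $ i = \<alpha>" if "yb $ i < C * inner (transpose Z *v \<theta>) (Z $ i)"
  proof -
    have "0 < g"
      using that by (simp add: g_def)
    then show ?thesis
      using along_axis[of \<alpha>] \<theta>_box by (simp add: zero_le_mult_iff)
  qed
  show "\<theta> $ i = \<beta>" if "C * inner (transpose Z *v \<theta>) (Z $ i) < yb $ i"
  proof -
    have "g < 0"
      using that by (simp add: g_def)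
    then show ?thesis
      using along_axis[of \<beta>] \<theta>_box by (simp add: zero_le_mult_iff)
  qed
qed

lemma norm_sub_midpoint_le_if_monotone:
  fixes u v :: "'a::real_inner"
  assumes c: "0 \<le> c" "c \<le> c'"
    and mono: "0 \<le> c * inner u (v - u) + c' * inner v (u - v)"
  shows "norm (c' *\<^sub>R v - ((c' + c) / 2) *\<^sub>R u) \<le> (c' - c) / 2 * norm u"
proof (rule power2_le_imp_le)
  \<comment> \<open>the centre and radius are chosen so that \<open>((c' + c)/2)\<^sup>2 - ((c' - c)/2)\<^sup>2 = c c'\<close>\<close>
  have "(norm (c' *\<^sub>R v - ((c' + c) / 2) *\<^sub>R u))\<^sup>2 - ((c' - c) / 2 * norm u)\<^sup>2
      = - c' * (c * inner u (v - u) + c' * inner v (u - v))"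
    unfolding power2_norm_eq_inner power_mult_distrib
    by (simp add: inner_diff_left inner_diff_right inner_commute[of v u] algebra_simps
        power2_eq_square) (simp add: field_simps)
  also have "\<dots> \<le> 0"
    using c mono by simp
  finally show "(norm (c' *\<^sub>R v - ((c' + c) / 2) *\<^sub>R u))\<^sup>2 \<le> ((c' - c) / 2 * norm u)\<^sup>2"
    by simp
  show "0 \<le> (c' - c) / 2 * norm u"
    using c by simp
qed

lemma inner_bounds_if_norm_sub_le:
  fixes v m z :: "'a::real_inner"
  assumes "norm (v - m) \<le> r"
  shows "inner m z - r * norm z \<le> inner v z" "inner v z \<le> inner m z + r * norm z"
proof -
  have "\<bar>inner (v - m) z\<bar> \<le> r * norm z"
    using Cauchy_Schwarz_ineq2[of "v - m" z] assms
    by (meson mult_right_mono norm_ge_zero order_trans)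
  then show "inner m z - r * norm z \<le> inner v z" "inner v z \<le> inner m z + r * norm z"
    by (auto simp: inner_diff_left abs_le_iff)
qed

lemma le_if_successor_less:
  fixes C :: "nat \<Rightarrow> 'a::order"
  assumes "\<forall>j. m \<le> j \<and> j < K \<longrightarrow> C j < C (Suc j)" "m \<le> j" "j \<le> K"
  shows "C m \<le> C j"
  using assms(2,3)
proof (induction j rule: dec_induct)
  case (step n)
  then have "n < K"
    by simp
  then have "C m \<le> C n" "C n < C (Suc n)"
    using step assms(1) by simp_all
  then show ?case
    by simp
qed simp

text \<open>The hypotheses on \<open>\<phi>\<close> only serve to identify the dual problem; the argument never uses them.\<close>

theorem corollary1:
  fixes x :: "'l::finite \<Rightarrow> real^'n"
    and y a b :: "'l \<Rightarrow> real"
    and \<phi> :: "real \<Rightarrow> real"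
    and \<alpha> \<beta> :: real
    and C :: "nat \<Rightarrow> real"
    and K k :: nat
    and \<theta>k \<theta>k1 :: "real^'l"
    and i :: 'l
  assumes phi_nonneg: "\<forall>t. \<phi> t \<ge> 0"
    and phi_nonconst: "\<exists>s t. \<phi> s \<noteq> \<phi> t"
    and phi_cont: "continuous_on UNIV \<phi>"
    and phi_sublin: "sublinear \<phi>"
    and phi_conj: "\<forall>s. fconj \<phi> s = iota_interval \<alpha> \<beta> s"
    and alpha_beta: "\<alpha> < \<beta>"
    and C_pos: "0 < C 1"
    and C_mono: "\<forall>j. 1 \<le> j \<and> j < K \<longrightarrow> C j < C (Suc j)"
    and k_range: "1 \<le> k" "k < K"
    and opt_k: "dual_opt (Zmat a x) (ybar b y) \<alpha> \<beta> (C k) \<theta>k"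
    and opt_k1: "dual_opt (Zmat a x) (ybar b y) \<alpha> \<beta> (C (Suc k)) \<theta>k1"
  shows "((C (Suc k) + C k) / 2 * inner (transpose (Zmat a x) *v \<theta>k) (a i *\<^sub>R x i)
            - (C (Suc k) - C k) / 2 * norm (transpose (Zmat a x) *v \<theta>k) * norm (a i *\<^sub>R x i)
            > b i * y i
          \<longrightarrow> \<theta>k1 $ i = \<alpha> \<and> i \<in> Rset a x b y (wstar (Zmat a x) (C (Suc k)) \<theta>k1))
       \<and> ((C (Suc k) + C k) / 2 * inner (transpose (Zmat a x) *v \<theta>k) (a i *\<^sub>R x i)
            + (C (Suc k) - C k) / 2 * norm (transpose (Zmat a x) *v \<theta>k) * norm (a i *\<^sub>R x i)
            < b i * y i
          \<longrightarrow> \<theta>k1 $ i = \<beta> \<and> i \<in> Lset a x b y (wstar (Zmat a x) (C (Suc k)) \<theta>k1))"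
proof -
  define Z where "Z = Zmat a x"
  define u where "u = transpose Z *v \<theta>k"
  define v where "v = transpose Z *v \<theta>k1"
  have "C 1 \<le> C k"
    using le_if_successor_less[OF C_mono k_range(1)] k_range(2) by simp
  then have C_k: "0 < C k" "C k < C (Suc k)"
    using C_pos C_mono k_range by auto
  have "norm (C (Suc k) *\<^sub>R v - ((C (Suc k) + C k) / 2) *\<^sub>R u) \<le> (C (Suc k) - C k) / 2 * norm u"
    using dual_opt_monotone[OF opt_k opt_k1] C_k
    by (intro norm_sub_midpoint_le_if_monotone) (auto simp: u_def v_def Z_def)
  note bounds = inner_bounds_if_norm_sub_le[OF this, of "Z $ i", unfolded inner_scaleR_left]
  have row: "Z $ i = a i *\<^sub>R x i"
    by (simp add: Z_def Zmat_def)
  have w: "- inner (wstar Z (C (Suc k)) \<theta>k1) (Z $ i) = C (Suc k) * inner v (Z $ i)"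
    by (simp add: wstar_def v_def)
  note coord = dual_opt_coordinate_at_bounds[OF opt_k1, of i, folded Z_def, folded v_def,
      unfolded ybar_def vec_lambda_beta]
  show ?thesis
    unfolding Z_def[symmetric] u_def[symmetric] row[symmetric] Rset_def Lset_def mem_Collect_eq w
    using bounds coord by linarith
qed

end
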